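(* Let $\Lambda$ be a well-founded semilattice. Then every nonprincipal strongly productive ultrafilter on $\Lambda$ is regular.
   Context: A semilattice is a commutative semigroup in which every element is idempotent, ordered by $x\le y$ iff $xy=x$; it is well-founded if every nonempty subset has a minimal element. For a sequence $\vec{x}=(x_n)_{n\in\omega}$, $\mathrm{FP}(\vec{x})$ is the set of all products $\prod_{i\in a}x_i$ with $a$ a finite nonempty subset of $\omega$, and $\mathrm{FP}_1(\vec{x})=\mathrm{FP}((x_{n+1})_n)$. An ultrafilter $q$ is strongly productive if every $A\in q$ contains some $\mathrm{FP}(\vec{x})\in q$. A nonprincipal strongly productive ultrafilter $q$ is regular if there is $B\in q$ such that for every sequence $\vec{x}$ with $\mathrm{FP}(\vec{x})\subseteq B$, the set $x_0\mathrm{FP}_1(\vec{x})$ does not belong to $q$. *)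

theory Defs
  imports Main
begin

text \<open>A semilattice (commutative idempotent semigroup) is modelled by the type class
  semilattice_inf: the product is inf, and x \<le> y iff inf x y = x (lemma le_iff_inf).\<close>

definition well_founded_sl :: "'a::semilattice_inf itself \<Rightarrow> bool" where
  "well_founded_sl _ \<longleftrightarrow>
     (\<forall>S::'a set. S \<noteq> {} \<longrightarrow> (\<exists>m\<in>S. \<forall>s\<in>S. s \<le> m \<longrightarrow> s = m))"

definition ultrafilter_on :: "'a set set \<Rightarrow> bool" where
  "ultrafilter_on q \<longleftrightarrow>
     UNIV \<in> q \<and> {} \<notin> q \<and>
     (\<forall>A B. A \<in> q \<longrightarrow> A \<subseteq> B \<longrightarrow> B \<in> q) \<and>
     (\<forall>A B. A \<in> q \<longrightarrow> B \<in> q \<longrightarrow> A \<inter> B \<in> q) \<and>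
     (\<forall>A. A \<in> q \<or> - A \<in> q)"

definition nonprincipal :: "'a set set \<Rightarrow> bool" where
  "nonprincipal q \<longleftrightarrow> (\<forall>x. q \<noteq> {A. x \<in> A})"

definition FP :: "(nat \<Rightarrow> 'a::semilattice_inf) \<Rightarrow> 'a set" where
  "FP x = {Inf_fin (x ` a) | a. finite a \<and> a \<noteq> {}}"

definition FP1 :: "(nat \<Rightarrow> 'a::semilattice_inf) \<Rightarrow> 'a set" where
  "FP1 x = FP (\<lambda>n. x (Suc n))"

definition strongly_productive :: "'a::semilattice_inf set set \<Rightarrow> bool" where
  "strongly_productive q \<longleftrightarrow> (\<forall>A\<in>q. \<exists>x. FP x \<subseteq> A \<and> FP x \<in> q)"

definition regular_uf :: "'a::semilattice_inf set set \<Rightarrow> bool" where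
  "regular_uf q \<longleftrightarrow> nonprincipal q \<and> strongly_productive q \<and>
     (\<exists>B\<in>q. \<forall>x. FP x \<subseteq> B \<longrightarrow> (\<lambda>y. inf (x 0) y) ` FP1 x \<notin> q)"

end

theory Submission
  imports Defs
begin

text \<open>The witness for regularity is the set \<open>B\<close> of elements whose principal down-set
  \<open>{..a}\<close> is not in \<open>q\<close>. If \<open>B \<notin> q\<close>, then \<open>-B \<in> q\<close>; a minimal element \<open>c\<close> of \<open>-B\<close>
  satisfies \<open>{..c} \<in> q\<close> and \<open>-B \<inter> {..c} = {c}\<close>, so \<open>q\<close> would be principal. Now if
  \<open>FP x \<subseteq> B\<close> then \<open>x 0 \<in> B\<close>, and \<open>x 0 \<cdot> FP\<^sub>1 x \<subseteq> {..x 0} \<notin> q\<close>.\<close>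

lemma ultrafilter_on_mono: "ultrafilter_on q \<Longrightarrow> A \<in> q \<Longrightarrow> A \<subseteq> B \<Longrightarrow> B \<in> q"
  unfolding ultrafilter_on_def by blast

lemma ultrafilter_on_Int: "ultrafilter_on q \<Longrightarrow> A \<in> q \<Longrightarrow> B \<in> q \<Longrightarrow> A \<inter> B \<in> q"
  unfolding ultrafilter_on_def by blast

lemma ultrafilter_on_empty: "ultrafilter_on q \<Longrightarrow> {} \<notin> q"
  unfolding ultrafilter_on_def by blast

lemma ultrafilter_on_compl: "ultrafilter_on q \<Longrightarrow> A \<notin> q \<Longrightarrow> - A \<in> q"
  unfolding ultrafilter_on_def by blast

lemma nonprincipal_ultrafilter_singleton_notin:
  assumes q: "ultrafilter_on q" and np: "nonprincipal q"
  shows "{c} \<notin> q"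
proof
  assume c: "{c} \<in> q"
  have "q = {A. c \<in> A}"
  proof (intro set_eqI iffI)
    fix A assume "A \<in> q"
    then have "A \<inter> {c} \<in> q" using ultrafilter_on_Int[OF q _ c] by blast
    then show "A \<in> {A. c \<in> A}"
      using ultrafilter_on_empty[OF q] by (auto simp: Int_insert_right split: if_splits)
  next
    fix A assume "A \<in> {A. c \<in> A}"
    then show "A \<in> q" using ultrafilter_on_mono[OF q c] by auto
  qed
  with np show False unfolding nonprincipal_def by blast
qed

lemma nonprincipal_ultrafilter_small_downsets:
  fixes q :: "'a::semilattice_inf set set"
  assumes wf: "well_founded_sl TYPE('a)" and q: "ultrafilter_on q" and np: "nonprincipal q"
  shows "{a. {..a} \<notin> q} \<in> q"
proof (rule ccontr)
  let ?B = "{a. {..a} \<notin> q}"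
  assume "?B \<notin> q"
  then have compl_B: "- ?B \<in> q" using ultrafilter_on_compl[OF q] by blast
  then have "- ?B \<noteq> {}" using ultrafilter_on_empty[OF q] by auto
  then obtain c where c: "c \<in> - ?B" and minimal: "\<forall>s\<in>- ?B. s \<le> c \<longrightarrow> s = c"
    using wf unfolding well_founded_sl_def by (elim allE[of _ "- ?B"]) blast
  have "- ?B \<inter> {..c} \<in> q"
    using ultrafilter_on_Int[OF q compl_B] c by auto
  moreover have "- ?B \<inter> {..c} \<subseteq> {c}" using minimal by auto
  ultimately have "{c} \<in> q" by (rule ultrafilter_on_mono[OF q])
  with nonprincipal_ultrafilter_singleton_notin[OF q np] show False by blast
qed

lemma FP_term: "x n \<in> FP x"
  unfolding FP_def by (rule CollectI, rule exI[of _ "{n}"]) auto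

theorem mainTheorem13:
  fixes q :: "'a::semilattice_inf set set"
  assumes "well_founded_sl TYPE('a)"
    and "ultrafilter_on q"
    and "nonprincipal q"
    and "strongly_productive q"
  shows "regular_uf q"
proof -
  let ?B = "{a. {..a} \<notin> q}"
  have "(\<lambda>y. inf (x 0) y) ` FP1 x \<notin> q" if "FP x \<subseteq> ?B" for x :: "nat \<Rightarrow> 'a"
  proof
    assume "(\<lambda>y. inf (x 0) y) ` FP1 x \<in> q"
    then have "{..x 0} \<in> q" by (rule ultrafilter_on_mono[OF assms(2)]) auto
    moreover have "{..x 0} \<notin> q" using that FP_term[of x 0] by blast
    ultimately show False by contradiction
  qed
  then show ?thesis
    using nonprincipal_ultrafilter_small_downsets[OF assms(1-3)] assms(3,4)
    unfolding regular_uf_def by blast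
qed

end
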